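(* Let $c$ be a primitive combinatorial closed curve. Then the sequence of double points of a double path of $c$ contains no double point more than once. In particular, a double path of $c$ has length strictly less than $|c|$.
   Context: A combinatorial closed curve $c$ of length $|c|$ on a combinatorial surface has vertices $c(i)$ and arcs $c[i,i+1]$, $i\in\mathbb{Z}/|c|\mathbb{Z}$. It is primitive if its free homotopy class is not a proper power of another class. A forward index path of length $\ell$ is $(i,i+1,\dots,i+\ell)$, with image path $(c[i,i+1],\dots,c[i+\ell-1,i+\ell])$. A double point of $c$ is a pair of indices $(i,j)$, $i\neq j$, with $c(i)=c(j)$, where $(i,j)$ and $(j,i)$ represent the same double point. A double path of $c$ of length $\ell$ is a pair of forward index paths $((i,\dots,i+\ell),(j,\dots,j+\ell))$ with $i\ne j$ and identical image paths; its sequence of double points is $(i+k,j+k)$, $k=0,\dots,\ell$. *)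

theory Defs
  imports Main
begin

text \<open>A combinatorial surface is given by a finite set D of darts (oriented arcs),
  a map tail giving the tail vertex of a dart, an involution rv reversing a dart
  (without fixed points), and a set F of faces, each given by its boundary closed walk;
  every dart occurs exactly once on the face boundaries.
  The head of a dart d is tail (rv d).
  A combinatorial closed curve c is a cyclic list of darts: c[k,k+1] = c ! (k mod |c|),
  c(k) = tail (c ! (k mod |c|)).\<close>

definition closed_walk :: "('d \<Rightarrow> 'v) \<Rightarrow> ('d \<Rightarrow> 'd) \<Rightarrow> 'd list \<Rightarrow> bool" where
  "closed_walk tail rv c \<longleftrightarrow>
     (\<forall>k < length c. tail (rv (c ! k)) = tail (c ! ((k + 1) mod length c)))"

definition comb_surface :: "'d set \<Rightarrow> ('d \<Rightarrow> 'v) \<Rightarrow> ('d \<Rightarrow> 'd) \<Rightarrow> 'd list set \<Rightarrow> bool" where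
  "comb_surface D tail rv F \<longleftrightarrow>
     finite D \<and>
     (\<forall>d\<in>D. rv d \<in> D \<and> rv d \<noteq> d \<and> rv (rv d) = d) \<and>
     (\<forall>f\<in>F. f \<noteq> [] \<and> set f \<subseteq> D \<and> closed_walk tail rv f) \<and>
     (\<forall>d\<in>D. card {(f, k). f \<in> F \<and> k < length f \<and> f ! k = d} = 1)"

text \<open>Elementary combinatorial homotopy moves on closed curves (free homotopy):
  cyclic rotation of the curve, removal of a spur, removal of a (rotated) face
  boundary or of its reversal.\<close>

inductive htp_step :: "'d set \<Rightarrow> ('d \<Rightarrow> 'd) \<Rightarrow> 'd list set \<Rightarrow> 'd list \<Rightarrow> 'd list \<Rightarrow> bool"
  for D rv F where
  rot: "htp_step D rv F (x # xs) (xs @ [x])"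
| spur: "e \<in> D \<Longrightarrow> htp_step D rv F (us @ [e, rv e] @ vs) (us @ vs)"
| face: "f \<in> F \<Longrightarrow> htp_step D rv F (us @ rotate r f @ vs) (us @ vs)"
| face_rev: "f \<in> F \<Longrightarrow> htp_step D rv F (us @ rotate r (map rv (rev f)) @ vs) (us @ vs)"

definition freely_homotopic ::
  "'d set \<Rightarrow> ('d \<Rightarrow> 'v) \<Rightarrow> ('d \<Rightarrow> 'd) \<Rightarrow> 'd list set \<Rightarrow> 'd list \<Rightarrow> 'd list \<Rightarrow> bool" where
  "freely_homotopic D tail rv F c c' \<longleftrightarrow>
     (\<lambda>x y. closed_walk tail rv x \<and> set x \<subseteq> D \<and> closed_walk tail rv y \<and> set y \<subseteq> D \<and>
            (htp_step D rv F x y \<or> htp_step D rv F y x))\<^sup>*\<^sup>* c c'"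

definition primitive ::
  "'d set \<Rightarrow> ('d \<Rightarrow> 'v) \<Rightarrow> ('d \<Rightarrow> 'd) \<Rightarrow> 'd list set \<Rightarrow> 'd list \<Rightarrow> bool" where
  "primitive D tail rv F c \<longleftrightarrow>
     \<not> (\<exists>a k. k \<ge> 2 \<and> closed_walk tail rv a \<and> set a \<subseteq> D \<and>
              freely_homotopic D tail rv F c (concat (replicate k a)))"

end

theory Submission imports Defs begin

text \<open>Let \<open>n = |c|\<close> and suppose the double points at steps \<open>k < k'\<close> of the double path coincide;
  put \<open>d = k' - k\<close>. Either each index returns to itself, so \<open>n\<close> divides \<open>d\<close> and the double path
  covers the whole curve, whence \<open>c\<close> agrees with its rotation by \<open>j - i\<close> everywhere. Or the two
  indices are exchanged, so \<open>d \<equiv> j - i\<close> and \<open>2 d \<equiv> 0 (mod n)\<close>; rotating by \<open>d\<close> twice is then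
  the identity, which extends the agreement of \<open>c\<close> with its rotation by \<open>d\<close> from a window of
  length \<open>d\<close> to one of length \<open>2 d \<ge> n\<close>, hence everywhere. In both cases \<open>c\<close> is invariant under
  a rotation \<open>s \<equiv> j - i \<noteq> 0\<close>, hence under the rotation by the proper divisor \<open>gcd s n\<close> of \<open>n\<close>,
  so \<open>c\<close> is literally a proper power of its prefix. Free homotopy being reflexive, this
  contradicts primitivity. Finally, \<open>l \<ge> n\<close>
  would repeat the first double point at step \<open>n\<close>.\<close>

lemma mod_add_left_cancel_nat:
  "((a::nat) + b) mod n = (a + c) mod n \<longleftrightarrow> b mod n = c mod n"
  by (simp add: nat_mod_eq_iff)

lemma mod_add_right_cancel_nat:
  "((b::nat) + a) mod n = (c + a) mod n \<longleftrightarrow> b mod n = c mod n"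
  by (simp add: nat_mod_eq_iff)

definition cyc :: "'a list \<Rightarrow> nat \<Rightarrow> 'a" where
  "cyc c x = c ! (x mod length c)"

definition rotation_invariant :: "'a list \<Rightarrow> nat \<Rightarrow> bool" where
  "rotation_invariant c s \<longleftrightarrow> (\<forall>x. cyc c (x + s) = cyc c x)"

lemma cyc_cong_mod: "x mod length c = y mod length c \<Longrightarrow> cyc c x = cyc c y"
  by (simp add: cyc_def)

lemma rotation_invariant_mult:
  assumes "rotation_invariant c s" shows "rotation_invariant c (u * s)"
  unfolding rotation_invariant_def
proof
  fix x show "cyc c (x + u * s) = cyc c x"
  proof (induction u arbitrary: x)
    case (Suc u)
    have "cyc c (x + Suc u * s) = cyc c ((x + s) + u * s)" by (simp add: algebra_simps)
    also have "\<dots> = cyc c x" using Suc.IH assms by (simp add: rotation_invariant_def)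
    finally show ?case .
  qed simp
qed

lemma rotation_invariant_gcd:
  assumes "rotation_invariant c s" "s \<noteq> 0"
  shows "rotation_invariant c (gcd s (length c))"
  unfolding rotation_invariant_def
proof
  fix x
  obtain u y where "s * u = length c * y + gcd s (length c)"
    using bezout_nat[OF \<open>s \<noteq> 0\<close>] by blast
  then have "x + u * s = (x + gcd s (length c)) + length c * y"
    by (simp add: algebra_simps)
  then have "(x + u * s) mod length c = (x + gcd s (length c)) mod length c"
    by (metis mod_mult_self2)
  then show "cyc c (x + gcd s (length c)) = cyc c x"
    using rotation_invariant_mult[OF assms(1), of u]
    by (metis cyc_cong_mod rotation_invariant_def)
qed

lemma periodic_list_eq_concat_replicate:
  assumes "g > 0" "length xs = m * g" "\<forall>k. k + g < length xs \<longrightarrow> xs ! (k + g) = xs ! k"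
  shows "xs = concat (replicate m (take g xs))"
  using assms
proof (induction m arbitrary: xs)
  case (Suc m)
  let ?ys = "drop g xs"
  have len: "length ?ys = m * g" using Suc.prems by simp
  have "\<forall>k. k + g < length ?ys \<longrightarrow> ?ys ! (k + g) = ?ys ! k"
  proof (intro allI impI)
    fix k assume "k + g < length ?ys"
    then have "xs ! ((k + g) + g) = xs ! (k + g)" using Suc.prems(3) by simp
    then show "?ys ! (k + g) = ?ys ! k" using \<open>k + g < length ?ys\<close> by (simp add: algebra_simps)
  qed
  then have ys: "?ys = concat (replicate m (take g ?ys))" using Suc.IH[OF Suc.prems(1) len] by blast
  have "take g ?ys = take g xs" if "m > 0"
  proof (rule nth_equalityI)
    show "length (take g ?ys) = length (take g xs)" using Suc.prems len that by simp
    fix k assume "k < length (take g ?ys)"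
    then have "k < g" using that by simp
    moreover have "g \<le> m * g" using that by simp
    ultimately have "k < m * g" by (rule less_le_trans)
    then have "k + g < length xs" using Suc.prems by simp
    then have "xs ! (k + g) = xs ! k" using Suc.prems(3) by blast
    with \<open>k < g\<close> \<open>k + g < length xs\<close> show "take g ?ys ! k = take g xs ! k"
      by (simp add: add.commute)
  qed
  then have "?ys = concat (replicate m (take g xs))" using ys len by (cases m) auto
  moreover have "xs = take g xs @ ?ys" by simp
  ultimately show ?case by simp
qed simp

lemma rotation_invariant_imp_power:
  assumes "rotation_invariant c g" "g > 0" "g dvd length c"
  shows "c = concat (replicate (length c div g) (take g c))"
proof (rule periodic_list_eq_concat_replicate)
  show "\<forall>k. k + g < length c \<longrightarrow> c ! (k + g) = c ! k"
  proof (intro allI impI)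
    fix k assume "k + g < length c"
    moreover have "cyc c (k + g) = cyc c k" using assms(1) by (simp add: rotation_invariant_def)
    ultimately show "c ! (k + g) = c ! k" by (simp add: cyc_def)
  qed
qed (use assms in auto)

lemma closed_walk_take_period:
  assumes "closed_walk tail rv c" "rotation_invariant c g" "0 < g" "g \<le> length c"
  shows "closed_walk tail rv (take g c)"
  unfolding closed_walk_def
proof (intro allI impI)
  fix k assume "k < length (take g c)"
  then have k: "k < g" "k < length c" using assms by auto
  have "cyc c (0 + g) = cyc c 0" using assms(2) by (simp only: rotation_invariant_def)
  then have wrap: "c ! (g mod length c) = c ! 0" by (simp add: cyc_def)
  have "c ! ((k + 1) mod length c) = take g c ! ((k + 1) mod g)"
  proof (cases "k + 1 < g")
    case False
    then have "k + 1 = g" using k by simp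
    then show ?thesis using wrap assms(3) by simp
  qed (use assms(4) in simp)
  moreover have "tail (rv (c ! k)) = tail (c ! ((k + 1) mod length c))"
    using assms(1) k by (simp add: closed_walk_def)
  ultimately show "tail (rv (take g c ! k)) = tail (take g c ! ((k + 1) mod length (take g c)))"
    using k assms(4) by (simp add: min_def)
qed

lemma primitive_imp_nonempty:
  assumes "primitive D tail rv F c" shows "c \<noteq> []"
proof
  assume "c = []"
  then have "freely_homotopic D tail rv F c (concat (replicate 2 []))"
    by (simp add: freely_homotopic_def)
  moreover have "closed_walk tail rv []" "set [] \<subseteq> D" by (simp_all add: closed_walk_def)
  ultimately show False using assms unfolding primitive_def by (blast intro: order_refl)
qed

lemma primitive_rotation_invariant_imp_mod_eq_0:
  assumes "primitive D tail rv F c" "closed_walk tail rv c" "set c \<subseteq> D"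
    and "rotation_invariant c s"
  shows "s mod length c = 0"
proof (rule ccontr)
  assume s: "s mod length c \<noteq> 0"
  have "c \<noteq> []" using primitive_imp_nonempty[OF assms(1)] .
  define g where "g = gcd s (length c)"
  have "s \<noteq> 0" using s mod_0 by metis
  have g: "0 < g" "g dvd length c" using \<open>s \<noteq> 0\<close> by (simp_all add: g_def)
  have "g \<noteq> length c"
  proof
    assume "g = length c"
    then have "length c dvd s" unfolding g_def by (metis gcd_dvd1)
    then show False using s by simp
  qed
  moreover have "g \<le> length c" using g(2) \<open>c \<noteq> []\<close> by (simp add: dvd_imp_le)
  ultimately have "g < length c" by simp
  have inv: "rotation_invariant c g"
    using rotation_invariant_gcd[OF assms(4) \<open>s \<noteq> 0\<close>] by (simp add: g_def)
  have "2 \<le> length c div g"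
  proof -
    obtain m where m: "length c = g * m" using g(2) by blast
    then have "length c div g = m" using g(1) by simp
    moreover have "m \<noteq> 0" "m \<noteq> 1" using m \<open>c \<noteq> []\<close> \<open>g < length c\<close> by auto
    ultimately show ?thesis by simp
  qed
  moreover have "closed_walk tail rv (take g c)"
    using closed_walk_take_period[OF assms(2) inv g(1)] \<open>g < length c\<close> by simp
  moreover have "set (take g c) \<subseteq> D" using assms(3) by (meson order_trans set_take_subset)
  moreover have "freely_homotopic D tail rv F c (concat (replicate (length c div g) (take g c)))"
    using rotation_invariant_imp_power[OF inv g(1,2)] by (simp add: freely_homotopic_def)
  ultimately show False using assms(1) by (auto simp: primitive_def)
qed

lemma rotation_invariant_of_window:
  assumes "c \<noteq> []" "\<forall>t < length c. cyc c (a + t + s) = cyc c (a + t)"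
  shows "rotation_invariant c s"
  unfolding rotation_invariant_def
proof
  fix x
  define t where "t = (x + length c - a mod length c) mod length c"
  have "t < length c" using assms(1) by (simp add: t_def)
  have "a mod length c \<le> x + length c" using assms(1) by (simp add: less_imp_le_nat trans_le_add2)
  then have "a mod length c + (x + length c - a mod length c) = x + length c" by simp
  moreover have "(a + t) mod length c = (a mod length c + (x + length c - a mod length c)) mod length c"
    by (simp add: t_def mod_add_left_eq mod_add_right_eq)
  ultimately have "(a + t) mod length c = x mod length c" by simp
  then have "cyc c (a + t) = cyc c x" "cyc c (a + t + s) = cyc c (x + s)"
    by (auto intro: cyc_cong_mod simp: mod_add_right_cancel_nat)
  moreover have "cyc c (a + t + s) = cyc c (a + t)" using assms(2) \<open>t < length c\<close> by blast
  ultimately show "cyc c (x + s) = cyc c x" by simp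
qed

lemma window_double_involutive_shift:
  assumes "\<forall>t < d. cyc c (a + t + d) = cyc c (a + t)" "(2 * d) mod length c = 0"
  shows "\<forall>t < 2 * d. cyc c (a + t + d) = cyc c (a + t)"
proof (intro allI impI)
  fix t assume "t < 2 * d"
  show "cyc c (a + t + d) = cyc c (a + t)"
  proof (cases "t < d")
    case False
    define u where "u = t - d"
    have u: "t = u + d" "u < d" using False \<open>t < 2 * d\<close> by (auto simp: u_def)
    have "cyc c (a + t + d) = cyc c (a + u + 2 * d)" by (simp add: u mult_2 add_ac)
    also have "\<dots> = cyc c (a + u + 0)"
      using assms(2) by (intro cyc_cong_mod) (simp only: mod_add_left_cancel_nat mod_0)
    also have "\<dots> = cyc c (a + t)" using assms(1) u by (simp add: add.assoc)
    finally show ?thesis .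
  qed (use assms in auto)
qed

lemma rotation_invariant_of_wrapping_double_path:
  assumes "c \<noteq> []" "\<forall>t < d. cyc c (a + t) = cyc c (b + t)" "length c \<le> d"
    and "(a + s) mod length c = b mod length c"
  shows "rotation_invariant c s"
proof (rule rotation_invariant_of_window[OF assms(1), of a])
  show "\<forall>t < length c. cyc c (a + t + s) = cyc c (a + t)"
  proof (intro allI impI)
    fix t assume "t < length c"
    have "(a + s + t) mod length c = (b + t) mod length c"
      using assms(4) by (simp only: mod_add_right_cancel_nat)
    then have "cyc c (a + t + s) = cyc c (b + t)" by (intro cyc_cong_mod) (simp add: add_ac)
    then show "cyc c (a + t + s) = cyc c (a + t)" using assms(2,3) \<open>t < length c\<close> by simp
  qed
qed

lemma rotation_invariant_of_swapping_double_path: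
  assumes "c \<noteq> []" "\<forall>t < d. cyc c (a + t) = cyc c (b + t)" "0 < d"
    and "(a + d) mod length c = b mod length c" "(b + d) mod length c = a mod length c"
  shows "rotation_invariant c d"
proof -
  have "(a + 2 * d) mod length c = (a + d + d) mod length c" by (simp add: mult_2 add.assoc)
  also have "\<dots> = (b + d) mod length c" using assms(4) by (simp only: mod_add_right_cancel_nat)
  also have "\<dots> = (a + 0) mod length c" using assms(5) by simp
  finally have double: "(2 * d) mod length c = 0" by (simp only: mod_add_left_cancel_nat mod_0)
  have "\<forall>t < d. cyc c (a + t + d) = cyc c (a + t)"
  proof (intro allI impI)
    fix t assume "t < d"
    have "(a + d + t) mod length c = (b + t) mod length c"
      using assms(4) by (simp only: mod_add_right_cancel_nat)
    then have "cyc c (a + t + d) = cyc c (b + t)" by (intro cyc_cong_mod) (simp add: add_ac)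
    then show "cyc c (a + t + d) = cyc c (a + t)" using assms(2) \<open>t < d\<close> by simp
  qed
  then have "\<forall>t < 2 * d. cyc c (a + t + d) = cyc c (a + t)"
    using double by (rule window_double_involutive_shift)
  moreover have "length c \<le> 2 * d" using double assms(3) by (simp add: dvd_imp_le mod_0_imp_dvd)
  ultimately show ?thesis by (intro rotation_invariant_of_window[OF assms(1), of a]) simp
qed

lemma primitive_double_path_distinct_double_points:
  assumes "primitive D tail rv F c" "closed_walk tail rv c" "set c \<subseteq> D"
    and "i < length c" "j < length c" "i \<noteq> j"
    and path: "\<forall>k < l. cyc c (i + k) = cyc c (j + k)"
    and "k < k'" "k' \<le> l"
  shows "{(i + k) mod length c, (j + k) mod length c}
           \<noteq> {(i + k') mod length c, (j + k') mod length c}"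
proof
  let ?n = "length c"
  define d where "d = k' - k"
  have d: "0 < d" "k' = k + d" using assms(8) by (auto simp: d_def)
  have window: "\<forall>t < d. cyc c (i + k + t) = cyc c (j + k + t)"
    using path assms(9) d by (simp add: add.assoc)
  have nonempty: "c \<noteq> []" using assms(4) by auto
  assume "{(i + k) mod ?n, (j + k) mod ?n} = {(i + k') mod ?n, (j + k') mod ?n}"
  then consider
      (wrapping) "(i + k + 0) mod ?n = (i + k + d) mod ?n"
    | (swapping) "(i + k + d) mod ?n = (j + k) mod ?n" "(j + k + d) mod ?n = (i + k) mod ?n"
    by (auto simp: doubleton_eq_iff d add.assoc)
  then obtain s where s: "rotation_invariant c s" "(i + k + s) mod ?n = (j + k) mod ?n"
  proof cases
    case wrapping
    then have "0 mod ?n = d mod ?n" by (simp only: mod_add_left_cancel_nat)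
    then have "?n \<le> d" using d(1) by (simp add: dvd_eq_mod_eq_0 dvd_imp_le)
    have "i + k + (j + ?n - i) = j + k + ?n" using assms(4) by simp
    then have "(i + k + (j + ?n - i)) mod ?n = (j + k) mod ?n" by (simp only: mod_add_self2)
    with \<open>?n \<le> d\<close> show ?thesis
      using that rotation_invariant_of_wrapping_double_path[OF nonempty window] by blast
  next
    case swapping
    then show ?thesis
      using that rotation_invariant_of_swapping_double_path[OF nonempty window d(1)] by blast
  qed
  have "s mod ?n = 0" using primitive_rotation_invariant_imp_mod_eq_0[OF assms(1-3) s(1)] .
  then have "(i + k) mod ?n = (j + k) mod ?n"
    using s(2) by (metis add.right_neutral mod_add_right_eq)
  then show False using assms(4-6) by (simp add: mod_add_right_cancel_nat)
qed

theorem lemma18: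
  fixes D :: "'d set" and tail :: "'d \<Rightarrow> 'v" and rv :: "'d \<Rightarrow> 'd"
    and F :: "'d list set" and c :: "'d list" and i j l :: nat
  assumes "comb_surface D tail rv F"
    and "closed_walk tail rv c" and "set c \<subseteq> D"
    and "primitive D tail rv F c"
    and "i < length c" and "j < length c" and "i \<noteq> j"
    and "\<forall>k < l. c ! ((i + k) mod length c) = c ! ((j + k) mod length c)"
  shows "(\<forall>k k'. k < k' \<and> k' \<le> l \<longrightarrow>
            {(i + k) mod length c, (j + k) mod length c}
              \<noteq> {(i + k') mod length c, (j + k') mod length c})
         \<and> l < length c"
proof -
  have distinct: "\<forall>k k'. k < k' \<and> k' \<le> l \<longrightarrow>
            {(i + k) mod length c, (j + k) mod length c}
              \<noteq> {(i + k') mod length c, (j + k') mod length c}"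
  proof -
    have "\<forall>k < l. cyc c (i + k) = cyc c (j + k)" using assms(8) by (simp add: cyc_def)
    then show ?thesis using primitive_double_path_distinct_double_points[OF assms(4,2,3,5-7)]
      by blast
  qed
  have "l < length c"
  proof (rule ccontr)
    assume "\<not> l < length c"
    moreover have "0 < length c" using le_less_trans[OF le0 assms(5)] .
    ultimately show False using distinct[rule_format, of 0 "length c"] by simp
  qed
  with distinct show ?thesis by blast
qed

end
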